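(* For $1\le s<t\le n$ and $1\le s'<t'\le n$ the following are equivalent: (1) $\operatorname{Ext}^1_\Lambda((s,t),(s',t'))\neq0$; (2) $\operatorname{Ext}^1_\Lambda((s',t'),(s,t))\ne0$; (3) the segments $(P_s,P_t)$ and $(P_{s'},P_{t'})$ are crossing diagonals of $P$.
   Context: $K$ a field, $R=K[x]$. $P$ is a polygon with vertices $P_1,\dots,P_n$ labelled counterclockwise; two diagonals cross if they share an interior point. $\Lambda\subset M_n(K(x))$ is the $R$-order with $(i,j)$ entry $x^{c_{ij}}R$, $c_{ij}=0$ for $i\le j$ except $c_{1n}=-1$, $c_{ij}=1$ for $i=j+1$, $c_{ij}=2$ for $i\ge j+2$. For $1\le s<t\le n$, $(s,t)$ is the left $\Lambda$-module of column vectors $[R^{s}\,(x)^{t-s}\,(x^2)^{n-t}]^t\subset K(x)^n$ ($s$ entries in $R$, then $t-s$ in $xR$, then $n-t$ in $x^2R$). *)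

theory Defs
  imports "HOL-Computational_Algebra.Polynomial_Factorial"
begin

text \<open>The field K(x) is realised as the fraction field of K[x] = 'k poly.
  Vectors in K(x)^n: functions on indices 1..n (zero outside).
  Matrices in M_n(K(x)): functions on pairs of indices in 1..n (zero outside).\<close>

type_synonym 'k vec = "nat \<Rightarrow> 'k poly fract"
type_synonym 'k mat = "nat \<Rightarrow> nat \<Rightarrow> 'k poly fract"

definition xpow :: "int \<Rightarrow> 'k::field poly fract" where
  "xpow c = (to_fract [:0, 1:]) powi c"

definition inxR :: "int \<Rightarrow> 'k::field poly fract \<Rightarrow> bool" where
  "inxR c f \<longleftrightarrow> (\<exists>p. f = to_fract p * xpow c)"

definition cexp :: "nat \<Rightarrow> nat \<Rightarrow> nat \<Rightarrow> int" where
  "cexp n i j = (if i \<le> j then (if i = 1 \<and> j = n then -1 else 0)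
                 else if i = j + 1 then 1 else 2)"

definition Lambda :: "nat \<Rightarrow> 'k::field mat set" where
  "Lambda n = {A. (\<forall>i j. A i j \<noteq> 0 \<longrightarrow> i \<in> {1..n} \<and> j \<in> {1..n}) \<and>
                  (\<forall>i\<in>{1..n}. \<forall>j\<in>{1..n}. inxR (cexp n i j) (A i j))}"

definition madd :: "'k::field mat \<Rightarrow> 'k mat \<Rightarrow> 'k mat" where
  "madd A B = (\<lambda>i j. A i j + B i j)"

definition mmul :: "nat \<Rightarrow> 'k::field mat \<Rightarrow> 'k mat \<Rightarrow> 'k mat" where
  "mmul n A B = (\<lambda>i j. \<Sum>k=1..n. A i k * B k j)"

definition mone :: "nat \<Rightarrow> 'k::field mat" where
  "mone n = (\<lambda>i j. if i = j \<and> i \<in> {1..n} then 1 else 0)"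

definition mvec :: "nat \<Rightarrow> 'k::field mat \<Rightarrow> 'k vec \<Rightarrow> 'k vec" where
  "mvec n A v = (\<lambda>i. \<Sum>j=1..n. A i j * v j)"

record ('a, 's) lmod =
  lcarrier :: "'a set"
  ladd :: "'a \<Rightarrow> 'a \<Rightarrow> 'a"
  lzero :: 'a
  lact :: "'s \<Rightarrow> 'a \<Rightarrow> 'a"

definition is_lmod :: "nat \<Rightarrow> ('a, 'k::field mat) lmod \<Rightarrow> bool" where
  "is_lmod n M \<longleftrightarrow>
     (let C = lcarrier M; ad = ladd M; z = lzero M; ac = lact M in
      (\<forall>a\<in>C. \<forall>b\<in>C. ad a b \<in> C) \<and> z \<in> C \<and>
      (\<forall>a\<in>C. \<forall>b\<in>C. \<forall>c\<in>C. ad (ad a b) c = ad a (ad b c)) \<and>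
      (\<forall>a\<in>C. \<forall>b\<in>C. ad a b = ad b a) \<and>
      (\<forall>a\<in>C. ad z a = a) \<and>
      (\<forall>a\<in>C. \<exists>b\<in>C. ad a b = z) \<and>
      (\<forall>A\<in>Lambda n. \<forall>a\<in>C. ac A a \<in> C) \<and>
      (\<forall>A\<in>Lambda n. \<forall>a\<in>C. \<forall>b\<in>C. ac A (ad a b) = ad (ac A a) (ac A b)) \<and>
      (\<forall>A\<in>Lambda n. \<forall>B\<in>Lambda n. \<forall>a\<in>C. ac (madd A B) a = ad (ac A a) (ac B a)) \<and>
      (\<forall>A\<in>Lambda n. \<forall>B\<in>Lambda n. \<forall>a\<in>C. ac (mmul n A B) a = ac A (ac B a)) \<and>
      (\<forall>a\<in>C. ac (mone n) a = a))"

definition lhom :: "nat \<Rightarrow> ('a, 'k::field mat) lmod \<Rightarrow> ('b, 'k mat) lmod \<Rightarrow> ('a \<Rightarrow> 'b) \<Rightarrow> bool" where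
  "lhom n M N f \<longleftrightarrow>
     (\<forall>a\<in>lcarrier M. f a \<in> lcarrier N) \<and>
     (\<forall>a\<in>lcarrier M. \<forall>b\<in>lcarrier M. f (ladd M a b) = ladd N (f a) (f b)) \<and>
     (\<forall>A\<in>Lambda n. \<forall>a\<in>lcarrier M. f (lact M A a) = lact N A (f a))"

text \<open>Ext^1_Lambda(M,N) \<noteq> 0 (Yoneda): there is a non-split short exact sequence
  0 \<rightarrow> N \<rightarrow> E \<rightarrow> M \<rightarrow> 0 of left Lambda-modules.  Since any such E is in bijection
  with N \<times> M as a set, it is no loss of generality to take the carrier of E
  inside the type of pairs.\<close>
definition ext1_nonzero :: "nat \<Rightarrow> ('a, 'k::field mat) lmod \<Rightarrow> ('b, 'k mat) lmod \<Rightarrow> bool" where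
  "ext1_nonzero n M N \<longleftrightarrow>
     (\<exists>(E :: ('b \<times> 'a, 'k mat) lmod) i p.
        is_lmod n E \<and>
        lhom n N E i \<and> inj_on i (lcarrier N) \<and>
        lhom n E M p \<and> p ` lcarrier E = lcarrier M \<and>
        i ` lcarrier N = {e \<in> lcarrier E. p e = lzero M} \<and>
        \<not> (\<exists>\<sigma>. lhom n M E \<sigma> \<and> (\<forall>m\<in>lcarrier M. p (\<sigma> m) = m)))"

definition dexp :: "nat \<Rightarrow> nat \<Rightarrow> nat \<Rightarrow> int" where
  "dexp s t i = (if i \<le> s then 0 else if i \<le> t then 1 else 2)"

text \<open>the Lambda-lattice (s,t) = [R^s (x)^(t-s) (x^2)^(n-t)]^t\<close>
definition lattice_st :: "nat \<Rightarrow> nat \<Rightarrow> nat \<Rightarrow> 'k::field vec set" where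
  "lattice_st n s t = {v. (\<forall>i. i \<notin> {1..n} \<longrightarrow> v i = 0) \<and>
                          (\<forall>i\<in>{1..n}. inxR (dexp s t i) (v i))}"

definition lat_mod :: "nat \<Rightarrow> nat \<Rightarrow> nat \<Rightarrow> ('k::field vec, 'k mat) lmod" where
  "lat_mod n s t = \<lparr>lcarrier = lattice_st n s t, ladd = (\<lambda>u v i. u i + v i),
                    lzero = (\<lambda>i. 0), lact = mvec n\<rparr>"

text \<open>Diagonals of the polygon P_1..P_n (labelled counterclockwise, convex position):
  (P_s,P_t), s<t, is a diagonal iff the vertices are not adjacent; two diagonals
  cross (share a point interior to P) iff their endpoints strictly interleave.\<close>
definition is_diagonal :: "nat \<Rightarrow> nat \<Rightarrow> nat \<Rightarrow> bool" where
  "is_diagonal n s t \<longleftrightarrow> 1 \<le> s \<and> s < t \<and> t \<le> n \<and> t \<noteq> s + 1 \<and> \<not> (s = 1 \<and> t = n)"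

definition crossing_diagonals :: "nat \<Rightarrow> nat \<Rightarrow> nat \<Rightarrow> nat \<Rightarrow> nat \<Rightarrow> bool" where
  "crossing_diagonals n s t s' t' \<longleftrightarrow>
     is_diagonal n s t \<and> is_diagonal n s' t' \<and>
     ((s < s' \<and> s' < t \<and> t < t') \<or> (s' < s \<and> s < t' \<and> t' < t))"

end

theory Submission
  imports Defs
begin

text \<open>The lattice \<open>(s,t)\<close> has the projective presentation
  \<open>0 \<rightarrow> P\<^sub>s \<inter> P\<^sub>t \<rightarrow> P\<^sub>s \<oplus> P\<^sub>t \<rightarrow> (s,t) \<rightarrow> 0\<close> with \<open>P\<^sub>s = \<Lambda> e\<^sub>s\<close> and \<open>P\<^sub>t = \<Lambda> x e\<^sub>t\<close>.
  Every \<open>\<Lambda>\<close>-linear map between lattices of monomial type is multiplication by a scalar, so an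
  extension of \<open>(s,t)\<close> by \<open>(s',t')\<close> is described by a scalar \<open>h\<close> with \<open>h (P\<^sub>s \<inter> P\<^sub>t) \<subseteq> (s',t')\<close>,
  and it splits iff \<open>h \<in> x\<^bsup>d s\<^esup>R + x\<^bsup>d t - 1\<^esup>R\<close>, where \<open>d\<close> are the exponents of \<open>(s',t')\<close>.
  Comparing exponents, some \<open>h\<close> escapes this ideal exactly when the pairs interleave, and then
  \<open>h = x\<^bsup>min (d s) (d t - 1) - 1\<^esup>\<close> yields a non-split extension as a pushout. Interleaving is
  symmetric and means that the diagonals cross.\<close>

section \<open>Fractional ideals of K[x]\<close>

lemma to_fract_power: "to_fract (p ^ m) = to_fract p ^ m"
  by (induction m) auto

lemma xpow_add: "xpow (a + b) = (xpow a * xpow b :: 'k::field poly fract)"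
  unfolding xpow_def by (simp add: power_int_add)

lemma xpow_nonzero [simp]: "xpow a \<noteq> (0 :: 'k::field poly fract)"
  unfolding xpow_def by simp

lemma xpow_0 [simp]: "xpow 0 = (1 :: 'k::field poly fract)"
  unfolding xpow_def by simp

lemma xpow_uminus_mult [simp]: "xpow (- c) * xpow c = (1 :: 'k::field poly fract)"
  using xpow_add[of "- c" c, where 'k = 'k] by simp

lemma xpow_of_nat: "xpow (int m) = (to_fract ([:0, 1:] ^ m) :: 'k::field poly fract)"
  unfolding xpow_def by (simp add: to_fract_power)

lemma inxR_mono:
  assumes "inxR c (f :: 'k::field poly fract)" "d \<le> c"
  shows "inxR d f"
proof -
  obtain p where p: "f = to_fract p * xpow c"
    using assms(1) unfolding inxR_def by auto
  have "xpow c = xpow (c - d) * (xpow d :: 'k poly fract)"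
    using xpow_add[of "c - d" d] by simp
  also have "xpow (c - d) = (to_fract ([:0, 1:] ^ nat (c - d)) :: 'k poly fract)"
    using xpow_of_nat[of "nat (c - d)"] assms(2) by simp
  finally have "f = to_fract (p * [:0, 1:] ^ nat (c - d)) * xpow d"
    using p by (simp add: mult.assoc)
  then show ?thesis
    unfolding inxR_def by blast
qed

lemma inxR_max_iff: "inxR (max c d) f \<longleftrightarrow> inxR c f \<and> inxR d (f :: 'k::field poly fract)"
  by (metis inxR_mono max.cobounded1 max.cobounded2 max_def)

lemma inxR_0 [simp]: "inxR c (0 :: 'k::field poly fract)"
  unfolding inxR_def by (rule exI[of _ 0]) simp

lemma inxR_add: "inxR c f \<Longrightarrow> inxR c g \<Longrightarrow> inxR c (f + g :: 'k::field poly fract)"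
  unfolding inxR_def by (metis distrib_right to_fract_add)

lemma inxR_uminus: "inxR c f \<Longrightarrow> inxR c (- f :: 'k::field poly fract)"
  unfolding inxR_def by (metis mult_minus_left to_fract_uminus)

lemma inxR_diff: "inxR c f \<Longrightarrow> inxR c g \<Longrightarrow> inxR c (f - g :: 'k::field poly fract)"
  using inxR_add[of c f "- g"] inxR_uminus[of c g] by simp

lemma inxR_mult: "inxR c f \<Longrightarrow> inxR d g \<Longrightarrow> inxR (c + d) (f * g :: 'k::field poly fract)"
  unfolding inxR_def xpow_add
  by (metis (no_types, opaque_lifting) mult.assoc mult.left_commute to_fract_mult)

lemma inxR_sum:
  "finite S \<Longrightarrow> (\<And>k. k \<in> S \<Longrightarrow> inxR c (f k)) \<Longrightarrow> inxR c (sum f S :: 'k::field poly fract)"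
  by (induction S rule: finite_induct) (auto intro: inxR_add)

lemma inxR_to_fract: "inxR 0 (to_fract p :: 'k::field poly fract)"
  unfolding inxR_def by auto

lemma inxR_xpow: "inxR c (xpow c :: 'k::field poly fract)"
  unfolding inxR_def by (rule exI[of _ 1]) simp

lemma inxR_mult_xpow_iff: "inxR (c + d) (f * xpow d) \<longleftrightarrow> inxR c (f :: 'k::field poly fract)"
proof
  assume "inxR (c + d) (f * xpow d)"
  then obtain p where "f * xpow d = to_fract p * xpow c * xpow d"
    unfolding inxR_def xpow_add by auto
  then show "inxR c f"
    unfolding inxR_def by auto
qed (use inxR_mult[OF _ inxR_xpow] in blast)

lemma xpow_not_inxR_succ: "\<not> inxR (k + 1) (xpow k :: 'k::field poly fract)"
proof
  assume "inxR (k + 1) (xpow k :: 'k poly fract)"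
  then have "inxR 1 (1 :: 'k poly fract)"
    using inxR_mult_xpow_iff[of 1 k "1 :: 'k poly fract"] by (simp add: add.commute)
  then obtain p where "(1 :: 'k poly fract) = to_fract p * to_fract [:0, 1:]"
    unfolding inxR_def xpow_def by auto
  then have "(1 :: 'k poly) = p * [:0, 1:]"
    by (metis to_fract_1 to_fract_eq_iff to_fract_mult)
  then have "poly (1 :: 'k poly) 0 = poly (p * [:0, 1:]) 0"
    by (rule arg_cong)
  then show False
    by simp
qed

section \<open>Vectors and matrices over K(x)\<close>

definition supported :: "nat \<Rightarrow> 'k::field vec \<Rightarrow> bool" where
  "supported n v \<longleftrightarrow> (\<forall>i. i \<notin> {1..n} \<longrightarrow> v i = 0)"

definition unit_vec :: "nat \<Rightarrow> 'k::field poly fract \<Rightarrow> 'k vec" where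
  "unit_vec j f = (\<lambda>i. if i = j then f else 0)"

lemma unit_vec_same [simp]: "unit_vec j f j = f"
  unfolding unit_vec_def by simp

definition vscale :: "'k::field poly fract \<Rightarrow> 'k vec \<Rightarrow> 'k vec" where
  "vscale f v = (\<lambda>i. f * v i)"

definition vrestrict :: "nat set \<Rightarrow> 'k::field vec \<Rightarrow> 'k vec" where
  "vrestrict S v = (\<lambda>i. if i \<in> S then v i else 0)"

text \<open>The matrix of the \<open>\<Lambda>\<close>-linear map \<open>\<Lambda> x\<^sup>c e\<^sub>k \<rightarrow> K(x)\<^sup>n\<close> sending \<open>x\<^sup>c e\<^sub>k\<close> to \<open>u\<close>.\<close>

definition col_mat :: "nat \<Rightarrow> int \<Rightarrow> 'k::field vec \<Rightarrow> 'k mat" where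
  "col_mat k c u = (\<lambda>i l. if l = k then xpow (- c) * u i else 0)"

lemma mvec_col_mat:
  assumes "k \<in> {1..n}"
  shows "mvec n (col_mat k c u) v = vscale (xpow (- c) * v k) u"
proof -
  have "(\<Sum>j=1..n. (if j = k then xpow (- c) * u i else 0) * v j) = xpow (- c) * v k * u i" for i
    using assms by (simp add: if_distrib[of "\<lambda>x. x * _"] cong: if_cong)
  then show ?thesis
    unfolding mvec_def col_mat_def vscale_def by simp
qed

lemma mvec_col_mat_unit_vec:
  "k \<in> {1..n} \<Longrightarrow> mvec n (col_mat k c u) (unit_vec k (xpow c)) = u"
  by (simp add: mvec_col_mat unit_vec_def vscale_def)

lemma mvec_elementary:
  "k \<in> {1..n} \<Longrightarrow> mvec n (col_mat k 0 (unit_vec j f)) v = unit_vec j (v k * f)"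
  by (auto simp: mvec_col_mat vscale_def unit_vec_def)

lemma mmul_col_mat: "mmul n B (col_mat k c u) = col_mat k c (mvec n B u)"
  unfolding mmul_def col_mat_def mvec_def by (auto simp: fun_eq_iff sum_distrib_left ac_simps)

lemma col_mat_add: "col_mat k c (\<lambda>i. u i + v i) = madd (col_mat k c u) (col_mat k c v)"
  unfolding col_mat_def madd_def by (auto simp: fun_eq_iff distrib_left)

lemma mvec_add: "mvec n A (\<lambda>i. u i + v i) = (\<lambda>i. mvec n A u i + mvec n A v i)"
  unfolding mvec_def by (simp add: distrib_left sum.distrib)

lemma mvec_diff: "mvec n A (\<lambda>i. u i - v i) = (\<lambda>i. mvec n A u i - mvec n A v i)"
  unfolding mvec_def by (simp add: right_diff_distrib sum_subtractf)

lemma mvec_vscale: "mvec n A (vscale f u) = vscale f (mvec n A u)"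
  unfolding mvec_def vscale_def by (simp add: sum_distrib_left mult.left_commute)

lemma mvec_madd: "mvec n (madd A B) v = (\<lambda>i. mvec n A v i + mvec n B v i)"
  unfolding mvec_def madd_def by (simp add: distrib_right sum.distrib)

lemma mvec_mmul: "mvec n (mmul n A B) v = mvec n A (mvec n B v)"
  unfolding mvec_def mmul_def
  by (auto simp: fun_eq_iff sum_distrib_left sum_distrib_right mult.assoc intro: sum.swap)

lemma mvec_mone:
  assumes "supported n v"
  shows "mvec n (mone n) v = v"
proof
  fix i
  show "mvec n (mone n) v i = v i"
  proof (cases "i \<in> {1..n}")
    case True
    then show ?thesis
      unfolding mvec_def mone_def by (simp add: if_distrib[of "\<lambda>x. x * _"] cong: if_cong)
  next
    case False
    then show ?thesis
      using assms unfolding mvec_def mone_def supported_def by (auto intro!: sum.neutral)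
  qed
qed

lemma mvec_zero: "mvec n A (\<lambda>i. 0) = (\<lambda>i. 0)"
  unfolding mvec_def by simp

lemma vrestrict_add: "vrestrict S (\<lambda>i. u i + v i) = (\<lambda>i. vrestrict S u i + vrestrict S v i)"
  unfolding vrestrict_def by auto

lemma vrestrict_add_compl: "(\<lambda>i. vrestrict (- S) v i + vrestrict S v i) = v"
  unfolding vrestrict_def by auto

section \<open>The order \<open>\<Lambda>\<close> and its lattices of monomial type\<close>

definition exp_lattice :: "nat \<Rightarrow> (nat \<Rightarrow> int) \<Rightarrow> 'k::field vec set" where
  "exp_lattice n e = {v. supported n v \<and> (\<forall>i\<in>{1..n}. inxR (e i) (v i))}"

definition Lambda_stable :: "nat \<Rightarrow> (nat \<Rightarrow> int) \<Rightarrow> bool" where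
  "Lambda_stable n e \<longleftrightarrow> (\<forall>i\<in>{1..n}. \<forall>j\<in>{1..n}. e i \<le> cexp n i j + e j)"

text \<open>\<open>exp_lattice n (col_exp n k c)\<close> is the projective module \<open>\<Lambda> x\<^sup>c e\<^sub>k\<close>.\<close>

definition col_exp :: "nat \<Rightarrow> nat \<Rightarrow> int \<Rightarrow> nat \<Rightarrow> int" where
  "col_exp n k c i = cexp n i k + c"

lemma lattice_st_eq_exp_lattice: "lattice_st n s t = exp_lattice n (dexp s t)"
  unfolding lattice_st_def exp_lattice_def supported_def by auto

lemma exp_latticeI:
  "supported n v \<Longrightarrow> (\<And>i. i \<in> {1..n} \<Longrightarrow> inxR (e i) (v i)) \<Longrightarrow> v \<in> exp_lattice n e"
  unfolding exp_lattice_def by auto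

lemma exp_latticeD:
  "v \<in> exp_lattice n e \<Longrightarrow> supported n v"
  "v \<in> exp_lattice n e \<Longrightarrow> i \<in> {1..n} \<Longrightarrow> inxR (e i) (v i)"
  unfolding exp_lattice_def by auto

lemma exp_lattice_add:
  "u \<in> exp_lattice n e \<Longrightarrow> v \<in> exp_lattice n e \<Longrightarrow> (\<lambda>i. u i + v i) \<in> exp_lattice n e"
  unfolding exp_lattice_def supported_def by (auto intro: inxR_add)

lemma exp_lattice_diff:
  "u \<in> exp_lattice n e \<Longrightarrow> v \<in> exp_lattice n e \<Longrightarrow> (\<lambda>i. u i - v i) \<in> exp_lattice n e"
  unfolding exp_lattice_def supported_def by (auto intro: inxR_diff)

lemma exp_lattice_uminus: "u \<in> exp_lattice n e \<Longrightarrow> (\<lambda>i. - u i) \<in> exp_lattice n e"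
  unfolding exp_lattice_def supported_def by (auto intro: inxR_uminus)

lemma exp_lattice_zero: "(\<lambda>i. 0) \<in> exp_lattice n e"
  unfolding exp_lattice_def supported_def by auto

lemma exp_lattice_vscale:
  "u \<in> exp_lattice n e \<Longrightarrow> inxR c f \<Longrightarrow> vscale f u \<in> exp_lattice n (\<lambda>i. c + e i)"
  unfolding exp_lattice_def supported_def vscale_def by (auto intro: inxR_mult)

lemma exp_lattice_antimono:
  "(\<And>i. i \<in> {1..n} \<Longrightarrow> e i \<le> f i) \<Longrightarrow> exp_lattice n f \<subseteq> exp_lattice n e"
  unfolding exp_lattice_def by (auto intro: inxR_mono)

lemma exp_lattice_max:
  "exp_lattice n (\<lambda>i. max (e i) (f i)) = exp_lattice n e \<inter> exp_lattice n f"
  unfolding exp_lattice_def inxR_max_iff by auto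

lemma unit_vec_exp_lattice:
  "j \<in> {1..n} \<Longrightarrow> inxR (e j) f \<Longrightarrow> unit_vec j f \<in> exp_lattice n e"
  unfolding exp_lattice_def supported_def unit_vec_def by auto

lemma vrestrict_exp_lattice:
  assumes "v \<in> exp_lattice n f" "\<And>i. i \<in> S \<Longrightarrow> i \<in> {1..n} \<Longrightarrow> e i \<le> f i"
  shows "vrestrict S v \<in> exp_lattice n e"
  using assms unfolding exp_lattice_def supported_def vrestrict_def by (auto intro: inxR_mono)

lemma LambdaD:
  "A \<in> Lambda n \<Longrightarrow> i \<in> {1..n} \<Longrightarrow> j \<in> {1..n} \<Longrightarrow> inxR (cexp n i j) (A i j)"
  "A \<in> Lambda n \<Longrightarrow> i \<notin> {1..n} \<Longrightarrow> A i j = 0"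
  unfolding Lambda_def by auto

lemma exp_lattice_mvec:
  assumes "Lambda_stable n e" "A \<in> Lambda n" "v \<in> exp_lattice n e"
  shows "mvec n A v \<in> exp_lattice n e"
proof (rule exp_latticeI)
  show "supported n (mvec n A v)"
    using LambdaD(2)[OF assms(2)] unfolding supported_def mvec_def by simp
next
  fix i assume i: "i \<in> {1..n}"
  have "inxR (e i) (A i j * v j)" if j: "j \<in> {1..n}" for j
    using inxR_mult[OF LambdaD(1)[OF assms(2) i j] exp_latticeD(2)[OF assms(3) j]]
      assms(1) i j unfolding Lambda_stable_def by (blast intro: inxR_mono)
  then show "inxR (e i) (mvec n A v i)"
    unfolding mvec_def by (auto intro!: inxR_sum)
qed

lemma col_mat_Lambda:
  assumes "k \<in> {1..n}" "u \<in> exp_lattice n (col_exp n k c)"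
  shows "col_mat k c u \<in> Lambda n"
proof -
  have "inxR (cexp n i k) (xpow (- c) * u i)" if "i \<in> {1..n}" for i
    using inxR_mult[OF inxR_xpow[of "- c"] exp_latticeD(2)[OF assms(2) that]]
    by (simp add: col_exp_def)
  then show ?thesis
    using assms exp_latticeD(1)[OF assms(2)]
    unfolding Lambda_def col_mat_def supported_def by auto
qed

lemma cexp_diag_nonpos: "cexp n k k \<le> 0"
  unfolding cexp_def by auto

lemma cexp_triangle:
  "2 \<le> n \<Longrightarrow> i \<in> {1..n} \<Longrightarrow> j \<in> {1..n} \<Longrightarrow> k \<in> {1..n} \<Longrightarrow> cexp n i k \<le> cexp n i j + cexp n j k"
  unfolding cexp_def by auto

lemma Lambda_stable_dexp: "1 \<le> s \<Longrightarrow> s < t \<Longrightarrow> t \<le> n \<Longrightarrow> Lambda_stable n (dexp s t)"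
  unfolding Lambda_stable_def cexp_def dexp_def by auto

lemma Lambda_stable_col_exp: "2 \<le> n \<Longrightarrow> k \<in> {1..n} \<Longrightarrow> Lambda_stable n (col_exp n k c)"
  unfolding Lambda_stable_def col_exp_def using cexp_triangle by fastforce

lemma Lambda_stable_max:
  "Lambda_stable n e \<Longrightarrow> Lambda_stable n f \<Longrightarrow> Lambda_stable n (\<lambda>i. max (e i) (f i))"
  unfolding Lambda_stable_def by fastforce

lemma unit_vec_col_lattice:
  assumes "k \<in> {1..n}"
  shows "unit_vec k (xpow c) \<in> exp_lattice n (col_exp n k c)"
proof (rule unit_vec_exp_lattice[OF assms])
  have "cexp n k k + c \<le> c"
    using cexp_diag_nonpos[of n k] by simp
  then show "inxR (col_exp n k c k) (xpow c)"
    unfolding col_exp_def by (rule inxR_mono[OF inxR_xpow])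
qed

lemma elementary_Lambda:
  "j \<in> {1..n} \<Longrightarrow> k \<in> {1..n} \<Longrightarrow> inxR (cexp n j k) f \<Longrightarrow> col_mat k 0 (unit_vec j f) \<in> Lambda n"
  by (auto intro!: col_mat_Lambda unit_vec_exp_lattice simp: col_exp_def)

text \<open>The elementary matrices force \<open>\<phi>\<close> to act diagonally, with the same factor in every
  coordinate.\<close>

lemma Lambda_equivariant_is_scalar:
  fixes \<phi> :: "'k::field vec \<Rightarrow> 'k vec"
  assumes "1 \<le> n" and stable: "Lambda_stable n e"
    and equivariant: "\<And>B u. B \<in> Lambda n \<Longrightarrow> u \<in> exp_lattice n e \<Longrightarrow> \<phi> (mvec n B u) = mvec n B (\<phi> u)"
    and supported: "\<And>u. u \<in> exp_lattice n e \<Longrightarrow> supported n (\<phi> u)"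
  shows "\<exists>h. \<forall>u \<in> exp_lattice n e. \<phi> u = vscale h u"
proof -
  let ?L = "exp_lattice n e :: 'k vec set"
  define g where "g j = unit_vec j (xpow (e j) :: 'k poly fract)" for j
  define h where "h j = \<phi> (g j) j / xpow (e j)" for j
  have g: "g j \<in> ?L" if "j \<in> {1..n}" for j
    unfolding g_def using that by (intro unit_vec_exp_lattice inxR_xpow)
  have \<phi>_g: "\<phi> (g j) j = h j * xpow (e j)" for j
    unfolding h_def by simp
  have coord: "\<phi> u j = h j * u j" if u: "u \<in> ?L" and j: "j \<in> {1..n}" for u j
  proof -
    obtain p where p: "u j = to_fract p * xpow (e j)"
      using exp_latticeD(2)[OF u j] unfolding inxR_def by auto
    have diag: "inxR (cexp n j j) (to_fract q :: 'k poly fract)" for q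
      using inxR_mono[OF inxR_to_fract cexp_diag_nonpos] .
    define B1 where "B1 = col_mat j 0 (unit_vec j (1 :: 'k poly fract))"
    define Bp where "Bp = col_mat j 0 (unit_vec j (to_fract p))"
    have B1: "B1 \<in> Lambda n" and Bp: "Bp \<in> Lambda n"
      unfolding B1_def Bp_def using elementary_Lambda[OF j j] diag[of 1] diag[of p] by auto
    have B1_Bp: "mvec n B1 u = mvec n Bp (g j)"
      unfolding B1_def Bp_def g_def mvec_elementary[OF j] using p by (simp add: mult.commute)
    have "\<phi> u j = mvec n B1 (\<phi> u) j"
      unfolding B1_def mvec_elementary[OF j] by simp
    also have "\<dots> = \<phi> (mvec n Bp (g j)) j"
      using equivariant[OF B1 u] B1_Bp by simp
    also have "\<dots> = mvec n Bp (\<phi> (g j)) j"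
      using equivariant[OF Bp g[OF j]] by simp
    also have "\<dots> = h j * u j"
      unfolding Bp_def mvec_elementary[OF j] using p \<phi>_g by (simp add: ac_simps)
    finally show ?thesis .
  qed
  have h_const: "h j = h 1" if j: "j \<in> {1..n}" for j
  proof -
    have one: "1 \<in> {1..n}"
      using assms(1) by simp
    define c where "c = cexp n 1 j"
    define B where "B = col_mat j 0 (unit_vec 1 (xpow c :: 'k poly fract))"
    have B: "B \<in> Lambda n"
      unfolding B_def c_def by (rule elementary_Lambda[OF one j inxR_xpow])
    have Bg: "mvec n B (g j) = unit_vec 1 (xpow (e j) * xpow c)"
      unfolding B_def g_def mvec_elementary[OF j] by simp
    have "h 1 * (xpow (e j) * xpow c) = \<phi> (mvec n B (g j)) 1"
      using coord[OF exp_lattice_mvec[OF stable B g[OF j]] one] by (simp add: Bg)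
    also have "\<dots> = mvec n B (\<phi> (g j)) 1"
      using equivariant[OF B g[OF j]] by simp
    also have "\<dots> = h j * (xpow (e j) * xpow c)"
      unfolding B_def mvec_elementary[OF j] using \<phi>_g by simp
    finally show ?thesis
      by simp
  qed
  have "\<phi> u = vscale (h 1) u" if u: "u \<in> ?L" for u
  proof
    fix i
    show "\<phi> u i = vscale (h 1) u i"
    proof (cases "i \<in> {1..n}")
      case True
      show ?thesis
        unfolding vscale_def coord[OF u True] h_const[OF True] ..
    next
      case False
      then show ?thesis
        using supported[OF u] exp_latticeD(1)[OF u] unfolding vscale_def supported_def by simp
    qed
  qed
  then show ?thesis
    by blast
qed

section \<open>A projective presentation of \<open>(s,t)\<close>\<close>

text \<open>\<open>(s,t)\<close> is generated by \<open>e\<^sub>s\<close> and \<open>x e\<^sub>t\<close>, hence is the image of \<open>\<Lambda> e\<^sub>s \<oplus> \<Lambda> x e\<^sub>t\<close>;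
  the kernel is the intersection \<open>\<Lambda> e\<^sub>s \<inter> \<Lambda> x e\<^sub>t\<close>, the lattice of \<open>meet_exp n s t\<close>.\<close>

definition meet_exp :: "nat \<Rightarrow> nat \<Rightarrow> nat \<Rightarrow> nat \<Rightarrow> int" where
  "meet_exp n s t i = max (col_exp n s 0 i) (col_exp n t 1 i)"

lemma meet_lattice:
  "exp_lattice n (meet_exp n s t) = exp_lattice n (col_exp n s 0) \<inter> exp_lattice n (col_exp n t 1)"
  unfolding meet_exp_def by (rule exp_lattice_max)

lemma Lambda_stable_meet_exp:
  "2 \<le> n \<Longrightarrow> s \<in> {1..n} \<Longrightarrow> t \<in> {1..n} \<Longrightarrow> Lambda_stable n (meet_exp n s t)"
  unfolding meet_exp_def by (intro Lambda_stable_max Lambda_stable_col_exp)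

context
  fixes n s t :: nat
  assumes st: "1 \<le> s" "s < t" "t \<le> n"
begin

lemma col_lattices_subset:
  "exp_lattice n (col_exp n s 0) \<subseteq> exp_lattice n (dexp s t)"
  "exp_lattice n (col_exp n t 1) \<subseteq> exp_lattice n (dexp s t)"
  by (rule exp_lattice_antimono; use st in \<open>auto simp: col_exp_def cexp_def dexp_def\<close>)+

lemma vrestrict_col_lattices:
  assumes "m \<in> exp_lattice n (dexp s t)"
  shows "vrestrict (- {s<..t}) m \<in> exp_lattice n (col_exp n s 0)"
    and "vrestrict {s<..t} m \<in> exp_lattice n (col_exp n t 1)"
  using assms
  by (rule vrestrict_exp_lattice; use st in \<open>auto simp: col_exp_def cexp_def dexp_def\<close>)+

end

section \<open>Interleaving pairs\<close>

definition interleaved :: "nat \<Rightarrow> nat \<Rightarrow> nat \<Rightarrow> nat \<Rightarrow> bool" where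
  "interleaved s t s' t' \<longleftrightarrow> (s < s' \<and> s' < t \<and> t < t') \<or> (s' < s \<and> s < t' \<and> t' < t)"

lemma interleaved_sym: "interleaved s t s' t' \<longleftrightarrow> interleaved s' t' s t"
  unfolding interleaved_def by auto

lemma crossing_diagonals_iff_interleaved:
  "1 \<le> s \<Longrightarrow> s < t \<Longrightarrow> t \<le> n \<Longrightarrow> 1 \<le> s' \<Longrightarrow> s' < t' \<Longrightarrow> t' \<le> n \<Longrightarrow>
    crossing_diagonals n s t s' t' \<longleftrightarrow> interleaved s t s' t'"
  unfolding crossing_diagonals_def is_diagonal_def interleaved_def by auto

text \<open>For interleaved pairs a non-split extension of \<open>(s,t)\<close> by \<open>(s',t')\<close> is obtained by twisting
  with \<open>x\<^bsup>twist_exp s t s' t'\<^esup>\<close>.\<close>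

definition twist_exp :: "nat \<Rightarrow> nat \<Rightarrow> nat \<Rightarrow> nat \<Rightarrow> int" where
  "twist_exp s t s' t' = min (dexp s' t' s) (dexp s' t' t - 1) - 1"

lemma dexp_le_twist_exp_meet_exp:
  assumes "1 \<le> s" "s < t" "t \<le> n" "1 \<le> s'" "s' < t'" "t' \<le> n"
    and "interleaved s t s' t'" "i \<in> {1..n}"
  shows "dexp s' t' i \<le> twist_exp s t s' t' + meet_exp n s t i"
  using assms unfolding interleaved_def twist_exp_def meet_exp_def col_exp_def cexp_def dexp_def
  by auto

lemma not_interleaved_meet_exp:
  assumes "1 \<le> s" "s < t" "t \<le> n" "1 \<le> s'" "s' < t'" "t' \<le> n"
    and "\<not> interleaved s t s' t'"
  obtains i where "i \<in> {1..n}"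
    "dexp s' t' s \<le> dexp s' t' i - meet_exp n s t i \<or> dexp s' t' t - 1 \<le> dexp s' t' i - meet_exp n s t i"
proof -
  define good where "good i \<longleftrightarrow> dexp s' t' s \<le> dexp s' t' i - meet_exp n s t i \<or>
    dexp s' t' t - 1 \<le> dexp s' t' i - meet_exp n s t i" for i
  have "good (s + 1) \<or> (if t < n then good (t + 1) else good 1)"
    using assms unfolding good_def interleaved_def meet_exp_def col_exp_def cexp_def dexp_def
    by auto
  moreover have "s + 1 \<in> {1..n}" "1 \<in> {1..n}" "t < n \<Longrightarrow> t + 1 \<in> {1..n}"
    using assms by auto
  ultimately show ?thesis
    using that unfolding good_def by (metis (full_types))
qed

section \<open>Extensions split unless the pairs interleave\<close>

definition has_section :: "nat \<Rightarrow> ('a, 'k::field mat) lmod \<Rightarrow> ('b, 'k mat) lmod \<Rightarrow> ('a \<Rightarrow> 'b) \<Rightarrow> bool" where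
  "has_section n E M p \<longleftrightarrow> (\<exists>\<sigma>. lhom n M E \<sigma> \<and> (\<forall>m\<in>lcarrier M. p (\<sigma> m) = m))"

locale lattice_extension =
  fixes n s t s' t' :: nat
    and E :: "('k::field vec \<times> 'k vec, 'k mat) lmod"
    and \<iota> :: "'k vec \<Rightarrow> 'k vec \<times> 'k vec"
    and \<pi> :: "'k vec \<times> 'k vec \<Rightarrow> 'k vec"
  assumes st: "1 \<le> s" "s < t" "t \<le> n" "1 \<le> s'" "s' < t'" "t' \<le> n"
    and E_lmod: "is_lmod n E"
    and \<iota>_hom: "lhom n (lat_mod n s' t') E \<iota>"
    and \<iota>_inj: "inj_on \<iota> (lattice_st n s' t')"
    and \<pi>_hom: "lhom n E (lat_mod n s t) \<pi>"
    and \<pi>_surj: "\<pi> ` lcarrier E = lattice_st n s t"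
    and exact: "\<iota> ` lattice_st n s' t' = {e \<in> lcarrier E. \<pi> e = (\<lambda>j. 0)}"
begin

abbreviation "C \<equiv> lcarrier E"
abbreviation plus (infixl "\<oplus>" 65) where "a \<oplus> b \<equiv> ladd E a b"
abbreviation "z \<equiv> lzero E"
abbreviation "act \<equiv> lact E"
abbreviation "M \<equiv> exp_lattice n (dexp s t)"
abbreviation "N \<equiv> exp_lattice n (dexp s' t')"
abbreviation "P\<^sub>s \<equiv> exp_lattice n (col_exp n s 0)"
abbreviation "P\<^sub>t \<equiv> exp_lattice n (col_exp n t 1)"

lemma n_ge_2: "2 \<le> n" and s_in: "s \<in> {1..n}" and t_in: "t \<in> {1..n}"
  using st by auto

lemma add_closed: "a \<in> C \<Longrightarrow> b \<in> C \<Longrightarrow> a \<oplus> b \<in> C"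
  and zero_closed: "z \<in> C"
  and add_assoc: "a \<in> C \<Longrightarrow> b \<in> C \<Longrightarrow> c \<in> C \<Longrightarrow> (a \<oplus> b) \<oplus> c = a \<oplus> (b \<oplus> c)"
  and add_commute: "a \<in> C \<Longrightarrow> b \<in> C \<Longrightarrow> a \<oplus> b = b \<oplus> a"
  and zero_add: "a \<in> C \<Longrightarrow> z \<oplus> a = a"
  and act_closed: "A \<in> Lambda n \<Longrightarrow> a \<in> C \<Longrightarrow> act A a \<in> C"
  and act_add: "A \<in> Lambda n \<Longrightarrow> a \<in> C \<Longrightarrow> b \<in> C \<Longrightarrow> act A (a \<oplus> b) = act A a \<oplus> act A b"
  and act_madd: "A \<in> Lambda n \<Longrightarrow> B \<in> Lambda n \<Longrightarrow> a \<in> C \<Longrightarrow> act (madd A B) a = act A a \<oplus> act B a"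
  and act_mmul: "A \<in> Lambda n \<Longrightarrow> B \<in> Lambda n \<Longrightarrow> a \<in> C \<Longrightarrow> act (mmul n A B) a = act A (act B a)"
  using E_lmod unfolding is_lmod_def Let_def by auto

lemma add_inverse: "a \<in> C \<Longrightarrow> \<exists>b\<in>C. a \<oplus> b = z"
  using E_lmod unfolding is_lmod_def Let_def by blast

lemma add_zero: "a \<in> C \<Longrightarrow> a \<oplus> z = a"
  using add_commute zero_add zero_closed by metis

lemma add_right_cancel:
  assumes "a \<in> C" "b \<in> C" "c \<in> C" "a \<oplus> c = b \<oplus> c"
  shows "a = b"
proof -
  obtain c' where "c' \<in> C" "c \<oplus> c' = z"
    using add_inverse assms(3) by blast
  then show ?thesis
    using assms add_assoc add_zero by metis
qed

lemma add_add_swap: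
  "a \<in> C \<Longrightarrow> b \<in> C \<Longrightarrow> c \<in> C \<Longrightarrow> d \<in> C \<Longrightarrow> (a \<oplus> b) \<oplus> (c \<oplus> d) = (a \<oplus> c) \<oplus> (b \<oplus> d)"
  by (metis add_assoc add_commute add_closed)

lemma \<iota>_closed: "y \<in> N \<Longrightarrow> \<iota> y \<in> C"
  and \<iota>_add: "y \<in> N \<Longrightarrow> y' \<in> N \<Longrightarrow> \<iota> (\<lambda>j. y j + y' j) = \<iota> y \<oplus> \<iota> y'"
  and \<iota>_act: "B \<in> Lambda n \<Longrightarrow> y \<in> N \<Longrightarrow> \<iota> (mvec n B y) = act B (\<iota> y)"
  using \<iota>_hom unfolding lhom_def lat_mod_def lattice_st_eq_exp_lattice by auto

lemma \<pi>_add: "e \<in> C \<Longrightarrow> e' \<in> C \<Longrightarrow> \<pi> (e \<oplus> e') = (\<lambda>j. \<pi> e j + \<pi> e' j)"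
  and \<pi>_act: "B \<in> Lambda n \<Longrightarrow> e \<in> C \<Longrightarrow> \<pi> (act B e) = mvec n B (\<pi> e)"
  using \<pi>_hom unfolding lhom_def lat_mod_def lattice_st_eq_exp_lattice by auto

lemma \<iota>_zero: "\<iota> (\<lambda>j. 0) = z"
proof -
  have zero: "(\<lambda>j. 0) \<in> N"
    by (rule exp_lattice_zero)
  have "\<iota> (\<lambda>j. 0) \<oplus> \<iota> (\<lambda>j. 0) = \<iota> (\<lambda>j. 0)"
    using \<iota>_add[OF zero zero] by simp
  also have "\<dots> = z \<oplus> \<iota> (\<lambda>j. 0)"
    using zero_add[OF \<iota>_closed[OF zero]] by simp
  finally show ?thesis
    using add_right_cancel \<iota>_closed[OF zero] zero_closed by blast
qed

lemma \<pi>_\<iota>: "y \<in> N \<Longrightarrow> \<pi> (\<iota> y) = (\<lambda>j. 0)"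
  using exact unfolding lattice_st_eq_exp_lattice by blast

lemma kernel_\<pi>: "e \<in> C \<Longrightarrow> \<pi> e = (\<lambda>j. 0) \<Longrightarrow> \<exists>y\<in>N. e = \<iota> y"
  using exact unfolding lattice_st_eq_exp_lattice by blast

lemma \<pi>_inverse:
  assumes "a \<in> C" "b \<in> C" "a \<oplus> b = z"
  shows "\<pi> b = (\<lambda>j. - \<pi> a j)"
proof -
  have "\<pi> z = (\<lambda>j. 0)"
    using \<pi>_\<iota>[OF exp_lattice_zero] \<iota>_zero by simp
  then have "(\<lambda>j. \<pi> a j + \<pi> b j) = (\<lambda>j. 0)"
    using \<pi>_add[OF assms(1,2)] assms(3) by simp
  then show ?thesis
    by (auto simp: fun_eq_iff eq_neg_iff_add_eq_0 add.commute)
qed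

lemma N_mvec: "B \<in> Lambda n \<Longrightarrow> y \<in> N \<Longrightarrow> mvec n B y \<in> N"
  using exp_lattice_mvec Lambda_stable_dexp st(4-6) by blast

lemma \<pi>_act_col_mat:
  assumes "k \<in> {1..n}" "u \<in> exp_lattice n (col_exp n k c)" "e \<in> C" "\<pi> e = unit_vec k (xpow c)"
  shows "\<pi> (act (col_mat k c u) e) = u"
  using \<pi>_act[OF col_mat_Lambda[OF assms(1,2)] assms(3)] assms(4) mvec_col_mat_unit_vec[OF assms(1)]
  by simp

lemma Lambda_stable_col_exp_s: "Lambda_stable n (col_exp n s 0)"
  and Lambda_stable_col_exp_t: "Lambda_stable n (col_exp n t 1)"
  using Lambda_stable_col_exp n_ge_2 s_in t_in by blast+

lemma act_col_mat_shift:
  assumes "k \<in> {1..n}" "u \<in> exp_lattice n (col_exp n k c)" "e \<in> C" "y \<in> N"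
  shows "act (col_mat k c u) (e \<oplus> \<iota> y) = act (col_mat k c u) e \<oplus> \<iota> (vscale (xpow (- c) * y k) u)"
    and "vscale (xpow (- c) * y k) u \<in> N"
proof -
  have A: "col_mat k c u \<in> Lambda n"
    using col_mat_Lambda[OF assms(1,2)] .
  show "vscale (xpow (- c) * y k) u \<in> N"
    using N_mvec[OF A assms(4)] by (simp add: mvec_col_mat[OF assms(1)])
  show "act (col_mat k c u) (e \<oplus> \<iota> y) = act (col_mat k c u) e \<oplus> \<iota> (vscale (xpow (- c) * y k) u)"
    using act_add[OF A assms(3) \<iota>_closed[OF assms(4)]] \<iota>_act[OF A assms(4)]
    by (simp add: mvec_col_mat[OF assms(1)])
qed

definition lifts :: "'k vec \<times> 'k vec \<Rightarrow> 'k vec \<times> 'k vec \<Rightarrow> bool" where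
  "lifts e\<^sub>1 e\<^sub>2 \<longleftrightarrow> e\<^sub>1 \<in> C \<and> \<pi> e\<^sub>1 = unit_vec s (xpow 0) \<and> e\<^sub>2 \<in> C \<and> \<pi> e\<^sub>2 = unit_vec t (xpow 1)"

lemma lifts_exist: "\<exists>e\<^sub>1 e\<^sub>2. lifts e\<^sub>1 e\<^sub>2"
proof -
  have "unit_vec s (xpow 0) \<in> \<pi> ` C" "unit_vec t (xpow 1) \<in> \<pi> ` C"
    using unit_vec_col_lattice s_in t_in col_lattices_subset[OF st(1-3)] \<pi>_surj
    unfolding lattice_st_eq_exp_lattice by blast+
  then obtain e\<^sub>1 e\<^sub>2 where "e\<^sub>1 \<in> C" "unit_vec s (xpow 0) = \<pi> e\<^sub>1" "e\<^sub>2 \<in> C" "unit_vec t (xpow 1) = \<pi> e\<^sub>2"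
    by blast
  then have "lifts e\<^sub>1 e\<^sub>2"
    unfolding lifts_def by simp
  then show ?thesis
    by blast
qed

lemma lift_shift: "e \<in> C \<Longrightarrow> y \<in> N \<Longrightarrow> e \<oplus> \<iota> y \<in> C \<and> \<pi> (e \<oplus> \<iota> y) = \<pi> e"
  using add_closed[OF _ \<iota>_closed] \<pi>_add[OF _ \<iota>_closed] \<pi>_\<iota> by simp

lemma lifts_shift:
  "lifts e\<^sub>1 e\<^sub>2 \<Longrightarrow> y \<in> N \<Longrightarrow> lifts (e\<^sub>1 \<oplus> \<iota> y) e\<^sub>2"
  "lifts e\<^sub>1 e\<^sub>2 \<Longrightarrow> y \<in> N \<Longrightarrow> lifts e\<^sub>1 (e\<^sub>2 \<oplus> \<iota> y)"
  unfolding lifts_def using lift_shift by auto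

text \<open>The lifts of \<open>u \<in> P\<^sub>s \<inter> P\<^sub>t\<close> through \<open>e\<^sub>1\<close> and through \<open>e\<^sub>2\<close> differ by an element of \<open>N\<close>.\<close>

definition defect :: "'k vec \<times> 'k vec \<Rightarrow> 'k vec \<times> 'k vec \<Rightarrow> 'k vec \<Rightarrow> 'k vec" where
  "defect e\<^sub>1 e\<^sub>2 u = (THE y. y \<in> N \<and> act (col_mat s 0 u) e\<^sub>1 = act (col_mat t 1 u) e\<^sub>2 \<oplus> \<iota> y)"

lemma defect_eqI:
  assumes "lifts e\<^sub>1 e\<^sub>2" "u \<in> P\<^sub>t" "y \<in> N"
    and "act (col_mat s 0 u) e\<^sub>1 = act (col_mat t 1 u) e\<^sub>2 \<oplus> \<iota> y"
  shows "defect e\<^sub>1 e\<^sub>2 u = y"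
  unfolding defect_def
proof (rule the_equality)
  fix y' assume y': "y' \<in> N \<and> act (col_mat s 0 u) e\<^sub>1 = act (col_mat t 1 u) e\<^sub>2 \<oplus> \<iota> y'"
  define b where "b = act (col_mat t 1 u) e\<^sub>2"
  have b: "b \<in> C"
    unfolding b_def using act_closed col_mat_Lambda[OF t_in assms(2)] assms(1) lifts_def by blast
  have "\<iota> y' \<oplus> b = b \<oplus> \<iota> y'"
    using add_commute b \<iota>_closed y' by blast
  also have "\<dots> = b \<oplus> \<iota> y"
    using assms(4) y' unfolding b_def by simp
  also have "\<dots> = \<iota> y \<oplus> b"
    using add_commute b \<iota>_closed assms(3) by blast
  finally have "\<iota> y' \<oplus> b = \<iota> y \<oplus> b" .
  then show "y' = y"
    using add_right_cancel \<iota>_closed \<iota>_inj b y' assms(3)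
    unfolding lattice_st_eq_exp_lattice by (metis inj_onD)
qed (use assms in blast)

lemma defect:
  assumes "lifts e\<^sub>1 e\<^sub>2" "u \<in> P\<^sub>s" "u \<in> P\<^sub>t"
  shows "defect e\<^sub>1 e\<^sub>2 u \<in> N"
    and "act (col_mat s 0 u) e\<^sub>1 = act (col_mat t 1 u) e\<^sub>2 \<oplus> \<iota> (defect e\<^sub>1 e\<^sub>2 u)"
proof -
  define a where "a = act (col_mat s 0 u) e\<^sub>1"
  define b where "b = act (col_mat t 1 u) e\<^sub>2"
  have a: "a \<in> C" "\<pi> a = u"
    unfolding a_def using assms act_closed col_mat_Lambda \<pi>_act_col_mat s_in unfolding lifts_def by blast+
  have b: "b \<in> C" "\<pi> b = u"
    unfolding b_def using assms act_closed col_mat_Lambda \<pi>_act_col_mat t_in unfolding lifts_def by blast+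
  obtain b' where b': "b' \<in> C" "b \<oplus> b' = z"
    using add_inverse[OF b(1)] by blast
  have "\<pi> (a \<oplus> b') = (\<lambda>j. 0)"
    using \<pi>_add[OF a(1) b'(1)] \<pi>_inverse[OF b(1) b'] a(2) b(2) by simp
  then obtain y where y: "y \<in> N" "a \<oplus> b' = \<iota> y"
    using kernel_\<pi> add_closed[OF a(1) b'(1)] by blast
  have "b \<oplus> \<iota> y = b \<oplus> (b' \<oplus> a)"
    using y(2) add_commute[OF a(1) b'(1)] by simp
  also have "\<dots> = a"
    using add_assoc[OF b(1) b'(1) a(1)] b'(2) zero_add[OF a(1)] by simp
  finally have "a = b \<oplus> \<iota> y" ..
  then have "defect e\<^sub>1 e\<^sub>2 u = y"
    using defect_eqI[OF assms(1,3) y(1)] unfolding a_def b_def by blast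
  then show "defect e\<^sub>1 e\<^sub>2 u \<in> N" "act (col_mat s 0 u) e\<^sub>1 = act (col_mat t 1 u) e\<^sub>2 \<oplus> \<iota> (defect e\<^sub>1 e\<^sub>2 u)"
    using y(1) \<open>a = b \<oplus> \<iota> y\<close> unfolding a_def b_def by simp_all
qed

lemma defect_mvec:
  assumes "lifts e\<^sub>1 e\<^sub>2" "B \<in> Lambda n" "u \<in> P\<^sub>s" "u \<in> P\<^sub>t"
  shows "defect e\<^sub>1 e\<^sub>2 (mvec n B u) = mvec n B (defect e\<^sub>1 e\<^sub>2 u)"
proof (rule defect_eqI[OF assms(1)])
  let ?d = "defect e\<^sub>1 e\<^sub>2 u"
  have e: "e\<^sub>1 \<in> C" "e\<^sub>2 \<in> C"
    using assms(1) unfolding lifts_def by auto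
  have As: "col_mat s 0 u \<in> Lambda n" and At: "col_mat t 1 u \<in> Lambda n"
    using col_mat_Lambda s_in t_in assms(3,4) by blast+
  show "mvec n B u \<in> P\<^sub>t"
    using exp_lattice_mvec[OF Lambda_stable_col_exp_t assms(2,4)] .
  show "mvec n B ?d \<in> N"
    using N_mvec[OF assms(2) defect(1)[OF assms(1,3,4)]] .
  have "act (col_mat s 0 (mvec n B u)) e\<^sub>1 = act B (act (col_mat s 0 u) e\<^sub>1)"
    using act_mmul[OF assms(2) As e(1)] by (simp add: mmul_col_mat)
  also have "\<dots> = act B (act (col_mat t 1 u) e\<^sub>2) \<oplus> act B (\<iota> ?d)"
    using defect(2)[OF assms(1,3,4)] act_add[OF assms(2) act_closed[OF At e(2)]]
      \<iota>_closed[OF defect(1)[OF assms(1,3,4)]] by simp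
  also have "\<dots> = act (col_mat t 1 (mvec n B u)) e\<^sub>2 \<oplus> \<iota> (mvec n B ?d)"
    using act_mmul[OF assms(2) At e(2)] \<iota>_act[OF assms(2) defect(1)[OF assms(1,3,4)]]
    by (simp add: mmul_col_mat)
  finally show "act (col_mat s 0 (mvec n B u)) e\<^sub>1 = act (col_mat t 1 (mvec n B u)) e\<^sub>2 \<oplus> \<iota> (mvec n B ?d)" .
qed

lemma defect_is_scalar:
  assumes "lifts e\<^sub>1 e\<^sub>2"
  shows "\<exists>h. \<forall>u \<in> exp_lattice n (meet_exp n s t). defect e\<^sub>1 e\<^sub>2 u = vscale h u"
proof (rule Lambda_equivariant_is_scalar)
  show "Lambda_stable n (meet_exp n s t)"
    using Lambda_stable_meet_exp n_ge_2 s_in t_in by blast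
  show "defect e\<^sub>1 e\<^sub>2 (mvec n B u) = mvec n B (defect e\<^sub>1 e\<^sub>2 u)"
    if "B \<in> Lambda n" "u \<in> exp_lattice n (meet_exp n s t)" for B u
    using defect_mvec[OF assms that(1)] that(2) unfolding meet_lattice by blast
  show "supported n (defect e\<^sub>1 e\<^sub>2 u)" if "u \<in> exp_lattice n (meet_exp n s t)" for u
    using defect(1)[OF assms] that exp_latticeD(1) unfolding meet_lattice by blast
qed (use st in simp)

lemma defect_shift_first:
  assumes "lifts e\<^sub>1 e\<^sub>2" "y \<in> N" "u \<in> P\<^sub>s" "u \<in> P\<^sub>t"
  shows "defect (e\<^sub>1 \<oplus> \<iota> y) e\<^sub>2 u = (\<lambda>j. defect e\<^sub>1 e\<^sub>2 u j + y s * u j)"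
proof (rule defect_eqI)
  let ?d = "defect e\<^sub>1 e\<^sub>2 u" and ?v = "vscale (y s) u"
  have e: "e\<^sub>1 \<in> C" "e\<^sub>2 \<in> C"
    using assms(1) unfolding lifts_def by auto
  have d: "?d \<in> N"
    using defect(1)[OF assms(1,3,4)] .
  have v: "?v \<in> N" "act (col_mat s 0 u) (e\<^sub>1 \<oplus> \<iota> y) = act (col_mat s 0 u) e\<^sub>1 \<oplus> \<iota> ?v"
    using act_col_mat_shift[OF s_in assms(3) e(1) assms(2)] by simp_all
  show "lifts (e\<^sub>1 \<oplus> \<iota> y) e\<^sub>2"
    using lifts_shift(1)[OF assms(1,2)] .
  show "(\<lambda>j. ?d j + y s * u j) \<in> N"
    using exp_lattice_add[OF d v(1)] by (simp add: vscale_def)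
  have "act (col_mat s 0 u) (e\<^sub>1 \<oplus> \<iota> y) = (act (col_mat t 1 u) e\<^sub>2 \<oplus> \<iota> ?d) \<oplus> \<iota> ?v"
    using v(2) defect(2)[OF assms(1,3,4)] by simp
  also have "\<dots> = act (col_mat t 1 u) e\<^sub>2 \<oplus> \<iota> (\<lambda>j. ?d j + y s * u j)"
    using add_assoc act_closed[OF col_mat_Lambda[OF t_in assms(4)] e(2)] \<iota>_closed d v(1) \<iota>_add[OF d v(1)]
    by (simp add: vscale_def)
  finally show "act (col_mat s 0 u) (e\<^sub>1 \<oplus> \<iota> y) = act (col_mat t 1 u) e\<^sub>2 \<oplus> \<iota> (\<lambda>j. ?d j + y s * u j)" .
qed (use assms in blast)

lemma defect_shift_second:
  assumes "lifts e\<^sub>1 e\<^sub>2" "y \<in> N" "u \<in> P\<^sub>s" "u \<in> P\<^sub>t"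
  shows "defect e\<^sub>1 (e\<^sub>2 \<oplus> \<iota> y) u = (\<lambda>j. defect e\<^sub>1 e\<^sub>2 u j - xpow (- 1) * y t * u j)"
proof (rule defect_eqI)
  let ?d = "defect e\<^sub>1 e\<^sub>2 u" and ?v = "vscale (xpow (- 1) * y t) u"
  have e: "e\<^sub>1 \<in> C" "e\<^sub>2 \<in> C"
    using assms(1) unfolding lifts_def by auto
  have d: "?d \<in> N"
    using defect(1)[OF assms(1,3,4)] .
  have v: "?v \<in> N" "act (col_mat t 1 u) (e\<^sub>2 \<oplus> \<iota> y) = act (col_mat t 1 u) e\<^sub>2 \<oplus> \<iota> ?v"
    using act_col_mat_shift[OF t_in assms(4) e(2) assms(2)] by simp_all
  have dv: "(\<lambda>j. ?d j - ?v j) \<in> N"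
    using exp_lattice_diff[OF d v(1)] .
  show "lifts e\<^sub>1 (e\<^sub>2 \<oplus> \<iota> y)"
    using lifts_shift(2)[OF assms(1,2)] .
  show "(\<lambda>j. ?d j - xpow (- 1) * y t * u j) \<in> N"
    using dv by (simp add: vscale_def)
  have "act (col_mat s 0 u) e\<^sub>1 = act (col_mat t 1 u) e\<^sub>2 \<oplus> \<iota> (\<lambda>j. ?v j + (?d j - ?v j))"
    using defect(2)[OF assms(1,3,4)] by simp
  also have "\<dots> = (act (col_mat t 1 u) e\<^sub>2 \<oplus> \<iota> ?v) \<oplus> \<iota> (\<lambda>j. ?d j - ?v j)"
    using add_assoc act_closed[OF col_mat_Lambda[OF t_in assms(4)] e(2)] \<iota>_closed v(1) dv
      \<iota>_add[OF v(1) dv] by simp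
  finally show "act (col_mat s 0 u) e\<^sub>1 = act (col_mat t 1 u) (e\<^sub>2 \<oplus> \<iota> y) \<oplus> \<iota> (\<lambda>j. ?d j - xpow (- 1) * y t * u j)"
    using v(2) by (simp add: vscale_def)
qed (use assms in blast)

definition lift_pair :: "'k vec \<times> 'k vec \<Rightarrow> 'k vec \<times> 'k vec \<Rightarrow> 'k vec \<Rightarrow> 'k vec \<Rightarrow> 'k vec \<times> 'k vec" where
  "lift_pair e\<^sub>1 e\<^sub>2 a w = act (col_mat s 0 a) e\<^sub>1 \<oplus> act (col_mat t 1 w) e\<^sub>2"

context
  fixes e\<^sub>1 e\<^sub>2 :: "'k vec \<times> 'k vec"
  assumes lifts: "lifts e\<^sub>1 e\<^sub>2"
begin

lemma lifts_closed: "e\<^sub>1 \<in> C" "e\<^sub>2 \<in> C"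
  using lifts unfolding lifts_def by auto

lemma act_col_mat_closed:
  "a \<in> P\<^sub>s \<Longrightarrow> act (col_mat s 0 a) e\<^sub>1 \<in> C"
  "w \<in> P\<^sub>t \<Longrightarrow> act (col_mat t 1 w) e\<^sub>2 \<in> C"
  using act_closed col_mat_Lambda s_in t_in lifts_closed by blast+

lemma lift_pair_closed: "a \<in> P\<^sub>s \<Longrightarrow> w \<in> P\<^sub>t \<Longrightarrow> lift_pair e\<^sub>1 e\<^sub>2 a w \<in> C"
  unfolding lift_pair_def using add_closed act_col_mat_closed by blast

lemma \<pi>_lift_pair: "a \<in> P\<^sub>s \<Longrightarrow> w \<in> P\<^sub>t \<Longrightarrow> \<pi> (lift_pair e\<^sub>1 e\<^sub>2 a w) = (\<lambda>j. a j + w j)"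
  unfolding lift_pair_def using lifts \<pi>_add act_col_mat_closed \<pi>_act_col_mat s_in t_in lifts_closed
  unfolding lifts_def by simp

lemma lift_pair_add:
  assumes "a \<in> P\<^sub>s" "a' \<in> P\<^sub>s" "w \<in> P\<^sub>t" "w' \<in> P\<^sub>t"
  shows "lift_pair e\<^sub>1 e\<^sub>2 (\<lambda>j. a j + a' j) (\<lambda>j. w j + w' j) = lift_pair e\<^sub>1 e\<^sub>2 a w \<oplus> lift_pair e\<^sub>1 e\<^sub>2 a' w'"
  unfolding lift_pair_def col_mat_add
  using act_madd[OF col_mat_Lambda[OF s_in assms(1)] col_mat_Lambda[OF s_in assms(2)] lifts_closed(1)]
    act_madd[OF col_mat_Lambda[OF t_in assms(3)] col_mat_Lambda[OF t_in assms(4)] lifts_closed(2)]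
    add_add_swap act_col_mat_closed assms by simp

lemma lift_pair_mvec:
  assumes "B \<in> Lambda n" "a \<in> P\<^sub>s" "w \<in> P\<^sub>t"
  shows "lift_pair e\<^sub>1 e\<^sub>2 (mvec n B a) (mvec n B w) = act B (lift_pair e\<^sub>1 e\<^sub>2 a w)"
  unfolding lift_pair_def
  using act_mmul[OF assms(1) col_mat_Lambda[OF s_in assms(2)] lifts_closed(1)]
    act_mmul[OF assms(1) col_mat_Lambda[OF t_in assms(3)] lifts_closed(2)]
    act_add[OF assms(1) act_col_mat_closed(1)[OF assms(2)] act_col_mat_closed(2)[OF assms(3)]]
  by (simp add: mmul_col_mat)

context
  assumes agree: "\<And>u. u \<in> P\<^sub>s \<Longrightarrow> u \<in> P\<^sub>t \<Longrightarrow> act (col_mat s 0 u) e\<^sub>1 = act (col_mat t 1 u) e\<^sub>2"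
begin

lemma lift_pair_eq:
  assumes "a \<in> P\<^sub>s" "a' \<in> P\<^sub>s" "w \<in> P\<^sub>t" "w' \<in> P\<^sub>t" and sum_eq: "(\<lambda>j. a j + w j) = (\<lambda>j. a' j + w' j)"
  shows "lift_pair e\<^sub>1 e\<^sub>2 a w = lift_pair e\<^sub>1 e\<^sub>2 a' w'"
proof -
  define u where "u = (\<lambda>j. a j - a' j)"
  have a: "a = (\<lambda>j. a' j + u j)" and w': "w' = (\<lambda>j. w j + u j)"
    unfolding u_def using fun_cong[OF sum_eq] by (auto simp: fun_eq_iff algebra_simps)
  have u: "u \<in> P\<^sub>s" "u \<in> P\<^sub>t"
    using exp_lattice_diff[OF assms(1,2)] exp_lattice_diff[OF assms(4,3)] w' unfolding u_def
    by (auto simp: fun_eq_iff)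
  have "lift_pair e\<^sub>1 e\<^sub>2 a w = (act (col_mat s 0 a') e\<^sub>1 \<oplus> act (col_mat t 1 u) e\<^sub>2) \<oplus> act (col_mat t 1 w) e\<^sub>2"
    unfolding lift_pair_def a col_mat_add
    using act_madd[OF col_mat_Lambda[OF s_in assms(2)] col_mat_Lambda[OF s_in u(1)] lifts_closed(1)]
      agree[OF u] by simp
  also have "\<dots> = act (col_mat s 0 a') e\<^sub>1 \<oplus> (act (col_mat t 1 w) e\<^sub>2 \<oplus> act (col_mat t 1 u) e\<^sub>2)"
    using add_assoc add_commute act_col_mat_closed assms(2,3) u by metis
  also have "\<dots> = lift_pair e\<^sub>1 e\<^sub>2 a' w'"
    unfolding lift_pair_def w' col_mat_add
    using act_madd[OF col_mat_Lambda[OF t_in assms(3)] col_mat_Lambda[OF t_in u(2)] lifts_closed(2)]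
    by simp
  finally show ?thesis .
qed

lemma has_section_if_lifts_agree: "has_section n E (lat_mod n s t) \<pi>"
proof -
  let ?S = "{s<..t}"
  define \<sigma> where "\<sigma> m = lift_pair e\<^sub>1 e\<^sub>2 (vrestrict (- ?S) m) (vrestrict ?S m)" for m
  have parts: "vrestrict (- ?S) m \<in> P\<^sub>s" "vrestrict ?S m \<in> P\<^sub>t" if "m \<in> M" for m
    using vrestrict_col_lattices[OF st(1-3) that] .
  have closed: "\<sigma> m \<in> C" if "m \<in> M" for m
    unfolding \<sigma>_def using lift_pair_closed parts[OF that] .
  have add: "\<sigma> (\<lambda>j. m j + m' j) = \<sigma> m \<oplus> \<sigma> m'" if "m \<in> M" "m' \<in> M" for m m'
    unfolding \<sigma>_def vrestrict_add using lift_pair_add parts that by blast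
  have act: "\<sigma> (mvec n B m) = act B (\<sigma> m)" if B: "B \<in> Lambda n" and m: "m \<in> M" for B m
  proof -
    have Bm: "mvec n B m \<in> M"
      using exp_lattice_mvec[OF Lambda_stable_dexp[OF st(1-3)] B m] .
    have "(\<lambda>j. vrestrict (- ?S) (mvec n B m) j + vrestrict ?S (mvec n B m) j)
        = (\<lambda>j. mvec n B (vrestrict (- ?S) m) j + mvec n B (vrestrict ?S m) j)"
      unfolding vrestrict_add_compl mvec_add[symmetric] ..
    then have "\<sigma> (mvec n B m) = lift_pair e\<^sub>1 e\<^sub>2 (mvec n B (vrestrict (- ?S) m)) (mvec n B (vrestrict ?S m))"
      unfolding \<sigma>_def using lift_pair_eq parts[OF Bm] parts[OF m]
        exp_lattice_mvec[OF Lambda_stable_col_exp_s B] exp_lattice_mvec[OF Lambda_stable_col_exp_t B]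
      by blast
    then show ?thesis
      unfolding \<sigma>_def using lift_pair_mvec[OF B parts[OF m]] by simp
  qed
  have \<pi>_\<sigma>: "\<pi> (\<sigma> m) = m" if "m \<in> M" for m
    unfolding \<sigma>_def \<pi>_lift_pair[OF parts[OF that]] vrestrict_add_compl ..
  show ?thesis
    unfolding has_section_def lhom_def lat_mod_def lattice_st_eq_exp_lattice
    using closed add act \<pi>_\<sigma> by (intro exI[of _ \<sigma>]) auto
qed

end

end

lemma has_section_if_defect_vanishes:
  assumes "lifts e\<^sub>1 e\<^sub>2" "\<And>u. u \<in> P\<^sub>s \<Longrightarrow> u \<in> P\<^sub>t \<Longrightarrow> defect e\<^sub>1 e\<^sub>2 u = (\<lambda>j. 0)"
  shows "has_section n E (lat_mod n s t) \<pi>"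
proof (rule has_section_if_lifts_agree[OF assms(1)])
  fix u :: "'k vec" assume "u \<in> P\<^sub>s" "u \<in> P\<^sub>t"
  then show "act (col_mat s 0 u) e\<^sub>1 = act (col_mat t 1 u) e\<^sub>2"
    using defect(2)[OF assms(1)] assms(2) \<iota>_zero add_zero act_col_mat_closed(2)[OF assms(1)] by simp
qed

lemma has_section_if_defect_decomposes:
  assumes lifts: "lifts e\<^sub>1 e\<^sub>2"
    and scalar: "\<And>u. u \<in> P\<^sub>s \<Longrightarrow> u \<in> P\<^sub>t \<Longrightarrow> defect e\<^sub>1 e\<^sub>2 u = vscale (a + b) u"
    and a: "inxR (dexp s' t' s) a" and b: "inxR (dexp s' t' t - 1) b"
  shows "has_section n E (lat_mod n s t) \<pi>"
proof -
  \<comment> \<open>shifting \<open>e\<^sub>1\<close> by \<open>y\<^sub>1\<close> and \<open>e\<^sub>2\<close> by \<open>y\<^sub>2\<close> removes \<open>a\<close> and \<open>b\<close> from the defect\<close>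
  define y\<^sub>1 where "y\<^sub>1 = unit_vec s (- a)"
  define y\<^sub>2 where "y\<^sub>2 = unit_vec t (b * xpow 1)"
  have y\<^sub>1: "y\<^sub>1 \<in> N"
    unfolding y\<^sub>1_def using unit_vec_exp_lattice[OF s_in, of "dexp s' t'"] inxR_uminus[OF a] by blast
  have "inxR (dexp s' t' t) (b * xpow 1)"
    using b inxR_mult_xpow_iff[of "dexp s' t' t - 1" 1 b] by simp
  then have y\<^sub>2: "y\<^sub>2 \<in> N"
    unfolding y\<^sub>2_def using unit_vec_exp_lattice[OF t_in] by blast
  have lifts\<^sub>2: "lifts e\<^sub>1 (e\<^sub>2 \<oplus> \<iota> y\<^sub>2)"
    using lifts_shift(2)[OF lifts y\<^sub>2] .
  show ?thesis
  proof (rule has_section_if_defect_vanishes)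
    show "lifts (e\<^sub>1 \<oplus> \<iota> y\<^sub>1) (e\<^sub>2 \<oplus> \<iota> y\<^sub>2)"
      using lifts_shift(1)[OF lifts\<^sub>2 y\<^sub>1] .
    fix u :: "'k vec" assume u: "u \<in> P\<^sub>s" "u \<in> P\<^sub>t"
    have x: "xpow (- 1) * (b * xpow 1) * c = b * c" for c
      by (simp add: mult.left_commute)
    show "defect (e\<^sub>1 \<oplus> \<iota> y\<^sub>1) (e\<^sub>2 \<oplus> \<iota> y\<^sub>2) u = (\<lambda>j. 0)"
      using defect_shift_first[OF lifts\<^sub>2 y\<^sub>1 u] defect_shift_second[OF lifts y\<^sub>2 u] scalar[OF u]
      unfolding y\<^sub>1_def y\<^sub>2_def by (simp add: vscale_def x distrib_right)
  qed
qed

lemma has_section_if_not_interleaved: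
  assumes "\<not> interleaved s t s' t'"
  shows "has_section n E (lat_mod n s t) \<pi>"
proof -
  obtain e\<^sub>1 e\<^sub>2 where lifts: "lifts e\<^sub>1 e\<^sub>2"
    using lifts_exist by blast
  obtain h where h: "\<And>u. u \<in> P\<^sub>s \<Longrightarrow> u \<in> P\<^sub>t \<Longrightarrow> defect e\<^sub>1 e\<^sub>2 u = vscale h u"
    using defect_is_scalar[OF lifts] unfolding meet_lattice by blast
  obtain i where i: "i \<in> {1..n}" and i_cases:
    "dexp s' t' s \<le> dexp s' t' i - meet_exp n s t i \<or> dexp s' t' t - 1 \<le> dexp s' t' i - meet_exp n s t i"
    using not_interleaved_meet_exp[OF st assms] by blast
  \<comment> \<open>the defect of a generator of \<open>P\<^sub>s \<inter> P\<^sub>t\<close> lies in \<open>N\<close>\<close>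
  let ?u = "unit_vec i (xpow (meet_exp n s t i))"
  have "?u \<in> exp_lattice n (meet_exp n s t)"
    using unit_vec_exp_lattice[OF i inxR_xpow] .
  then have "vscale h ?u \<in> N"
    using h defect(1)[OF lifts] unfolding meet_lattice by fastforce
  then have "inxR (dexp s' t' i - meet_exp n s t i + meet_exp n s t i) (h * xpow (meet_exp n s t i))"
    using exp_latticeD(2)[OF _ i] by (fastforce simp: vscale_def)
  then have h_in: "inxR (dexp s' t' i - meet_exp n s t i) h"
    unfolding inxR_mult_xpow_iff .
  from i_cases show ?thesis
  proof
    assume "dexp s' t' s \<le> dexp s' t' i - meet_exp n s t i"
    then show ?thesis
      using has_section_if_defect_decomposes[OF lifts, of h 0] h inxR_mono[OF h_in] by simp
  next
    assume "dexp s' t' t - 1 \<le> dexp s' t' i - meet_exp n s t i"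
    then show ?thesis
      using has_section_if_defect_decomposes[OF lifts, of 0 h] h inxR_mono[OF h_in] by simp
  qed
qed

end

lemma ext1_zero_if_not_interleaved:
  assumes st: "1 \<le> s" "s < t" "t \<le> n" "1 \<le> s'" "s' < t'" "t' \<le> n"
    and "\<not> interleaved s t s' t'"
  shows "\<not> ext1_nonzero n (lat_mod n s t :: ('k::field vec, 'k mat) lmod) (lat_mod n s' t')"
proof
  assume "ext1_nonzero n (lat_mod n s t :: ('k::field vec, 'k mat) lmod) (lat_mod n s' t')"
  then obtain E :: "('k vec \<times> 'k vec, 'k mat) lmod" and \<iota> \<pi> where
    ext: "is_lmod n E" "lhom n (lat_mod n s' t') E \<iota>" "inj_on \<iota> (lcarrier (lat_mod n s' t'))"
      "lhom n E (lat_mod n s t) \<pi>" "\<pi> ` lcarrier E = lcarrier (lat_mod n s t)"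
      "\<iota> ` lcarrier (lat_mod n s' t') = {e \<in> lcarrier E. \<pi> e = lzero (lat_mod n s t)}"
    and non_split: "\<not> has_section n E (lat_mod n s t) \<pi>"
    unfolding ext1_nonzero_def has_section_def by blast
  interpret lattice_extension n s t s' t' E \<iota> \<pi>
    using st ext by unfold_locales (simp_all add: lat_mod_def)
  show False
    using has_section_if_not_interleaved assms(7) non_split by blast
qed

section \<open>Interleaving pairs admit a non-split extension\<close>

text \<open>The pushout of \<open>0 \<rightarrow> P\<^sub>s \<inter> P\<^sub>t \<rightarrow> P\<^sub>s \<oplus> P\<^sub>t \<rightarrow> (s,t) \<rightarrow> 0\<close> along multiplication by \<open>h\<close>:
  pairs \<open>(y, a + w)\<close> with \<open>a \<in> P\<^sub>s\<close>, \<open>w \<in> P\<^sub>t\<close> and \<open>y \<equiv> h a\<close> modulo \<open>(s',t')\<close>.\<close>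

definition twisted_carrier ::
  "nat \<Rightarrow> nat \<Rightarrow> nat \<Rightarrow> nat \<Rightarrow> nat \<Rightarrow> 'k::field poly fract \<Rightarrow> ('k vec \<times> 'k vec) set" where
  "twisted_carrier n s t s' t' h = {e. \<exists>a w. a \<in> exp_lattice n (col_exp n s 0) \<and>
     w \<in> exp_lattice n (col_exp n t 1) \<and> snd e = (\<lambda>j. a j + w j) \<and>
     (\<lambda>j. fst e j - h * a j) \<in> exp_lattice n (dexp s' t')}"

definition twisted_ext ::
  "nat \<Rightarrow> nat \<Rightarrow> nat \<Rightarrow> nat \<Rightarrow> nat \<Rightarrow> 'k::field poly fract \<Rightarrow> ('k vec \<times> 'k vec, 'k mat) lmod" where
  "twisted_ext n s t s' t' h = \<lparr>lcarrier = twisted_carrier n s t s' t' h,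
     ladd = (\<lambda>e e'. (\<lambda>j. fst e j + fst e' j, \<lambda>j. snd e j + snd e' j)),
     lzero = (\<lambda>j. 0, \<lambda>j. 0),
     lact = (\<lambda>B e. (mvec n B (fst e), mvec n B (snd e)))\<rparr>"

locale twisted_extension =
  fixes n s t s' t' :: nat and h :: "'k::field poly fract"
  assumes st: "1 \<le> s" "s < t" "t \<le> n" "1 \<le> s'" "s' < t'" "t' \<le> n"
    and twist: "\<And>u. u \<in> exp_lattice n (meet_exp n s t) \<Longrightarrow> vscale h u \<in> exp_lattice n (dexp s' t')"
begin

abbreviation "M \<equiv> exp_lattice n (dexp s t) :: 'k vec set"
abbreviation "N \<equiv> exp_lattice n (dexp s' t') :: 'k vec set"
abbreviation "P\<^sub>s \<equiv> exp_lattice n (col_exp n s 0) :: 'k vec set"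
abbreviation "P\<^sub>t \<equiv> exp_lattice n (col_exp n t 1) :: 'k vec set"
abbreviation "C \<equiv> twisted_carrier n s t s' t' h"
abbreviation "E \<equiv> twisted_ext n s t s' t' h"

lemma s_in: "s \<in> {1..n}" and t_in: "t \<in> {1..n}" and n_ge_2: "2 \<le> n"
  using st by auto

lemma twist_col_lattices: "u \<in> P\<^sub>s \<Longrightarrow> u \<in> P\<^sub>t \<Longrightarrow> (\<lambda>j. h * u j) \<in> N"
  using twist unfolding meet_lattice vscale_def by blast

lemma twistedI:
  "a \<in> P\<^sub>s \<Longrightarrow> w \<in> P\<^sub>t \<Longrightarrow> snd e = (\<lambda>j. a j + w j) \<Longrightarrow> (\<lambda>j. fst e j - h * a j) \<in> N \<Longrightarrow> e \<in> C"
  unfolding twisted_carrier_def by blast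

lemma twistedE:
  assumes "e \<in> C"
  obtains a w where "a \<in> P\<^sub>s" "w \<in> P\<^sub>t" "snd e = (\<lambda>j. a j + w j)" "(\<lambda>j. fst e j - h * a j) \<in> N"
  using assms unfolding twisted_carrier_def by blast

lemma twisted_fst_if_snd_in_P\<^sub>s:
  assumes "e \<in> C" "snd e \<in> P\<^sub>s"
  shows "(\<lambda>j. fst e j - h * snd e j) \<in> N"
proof -
  obtain a w where aw: "a \<in> P\<^sub>s" "w \<in> P\<^sub>t" "snd e = (\<lambda>j. a j + w j)" "(\<lambda>j. fst e j - h * a j) \<in> N"
    using twistedE[OF assms(1)] .
  have "w = (\<lambda>j. snd e j - a j)"
    using aw(3) by auto
  then have "w \<in> P\<^sub>s"
    using exp_lattice_diff[OF assms(2) aw(1)] by simp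
  then have "(\<lambda>j. (fst e j - h * a j) - h * w j) \<in> N"
    using exp_lattice_diff[OF aw(4) twist_col_lattices[OF _ aw(2)]] by simp
  then show ?thesis
    using aw(3) by (simp add: algebra_simps)
qed

lemma twisted_fst_if_snd_in_P\<^sub>t:
  assumes "e \<in> C" "snd e \<in> P\<^sub>t"
  shows "fst e \<in> N"
proof -
  obtain a w where aw: "a \<in> P\<^sub>s" "w \<in> P\<^sub>t" "snd e = (\<lambda>j. a j + w j)" "(\<lambda>j. fst e j - h * a j) \<in> N"
    using twistedE[OF assms(1)] .
  have "a = (\<lambda>j. snd e j - w j)"
    using aw(3) by auto
  then have "a \<in> P\<^sub>t"
    using exp_lattice_diff[OF assms(2) aw(2)] by simp
  then have "(\<lambda>j. (fst e j - h * a j) + h * a j) \<in> N"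
    using exp_lattice_add[OF aw(4) twist_col_lattices[OF aw(1)]] by simp
  then show ?thesis
    by simp
qed

lemma twisted_supported: "e \<in> C \<Longrightarrow> supported n (fst e) \<and> supported n (snd e)"
  by (elim twistedE) (auto simp: supported_def dest!: exp_latticeD(1))

lemma twisted_is_lmod: "is_lmod n E"
proof -
  have add: "(\<lambda>j. fst e j + fst e' j, \<lambda>j. snd e j + snd e' j) \<in> C" if e: "e \<in> C" "e' \<in> C" for e e'
  proof -
    obtain a w where aw: "a \<in> P\<^sub>s" "w \<in> P\<^sub>t" "snd e = (\<lambda>j. a j + w j)" "(\<lambda>j. fst e j - h * a j) \<in> N"
      using twistedE[OF e(1)] .
    obtain a' w' where aw': "a' \<in> P\<^sub>s" "w' \<in> P\<^sub>t" "snd e' = (\<lambda>j. a' j + w' j)" "(\<lambda>j. fst e' j - h * a' j) \<in> N"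
      using twistedE[OF e(2)] .
    show ?thesis
      by (rule twistedI[OF exp_lattice_add[OF aw(1) aw'(1)] exp_lattice_add[OF aw(2) aw'(2)]])
        (use aw(3) aw'(3) exp_lattice_add[OF aw(4) aw'(4)] in \<open>auto simp: algebra_simps\<close>)
  qed
  have zero: "(\<lambda>j. 0, \<lambda>j. 0) \<in> C"
    by (rule twistedI[OF exp_lattice_zero exp_lattice_zero]) (auto intro: exp_lattice_zero)
  have neg: "(\<lambda>j. - fst e j, \<lambda>j. - snd e j) \<in> C" if e: "e \<in> C" for e
  proof -
    obtain a w where aw: "a \<in> P\<^sub>s" "w \<in> P\<^sub>t" "snd e = (\<lambda>j. a j + w j)" "(\<lambda>j. fst e j - h * a j) \<in> N"
      using twistedE[OF e] .
    show ?thesis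
      by (rule twistedI[OF exp_lattice_uminus[OF aw(1)] exp_lattice_uminus[OF aw(2)]])
        (use aw(3) exp_lattice_uminus[OF aw(4)] in \<open>auto simp: algebra_simps\<close>)
  qed
  have act: "(mvec n B (fst e), mvec n B (snd e)) \<in> C" if B: "B \<in> Lambda n" and e: "e \<in> C" for B e
  proof -
    obtain a w where aw: "a \<in> P\<^sub>s" "w \<in> P\<^sub>t" "snd e = (\<lambda>j. a j + w j)" "(\<lambda>j. fst e j - h * a j) \<in> N"
      using twistedE[OF e] .
    have "mvec n B (\<lambda>j. fst e j - h * a j) = (\<lambda>j. mvec n B (fst e) j - h * mvec n B a j)"
      using mvec_diff[of n B "fst e" "vscale h a"] mvec_vscale[of n B h a] by (simp add: vscale_def)
    then show ?thesis
      using exp_lattice_mvec[OF Lambda_stable_dexp[OF st(4-6)] B aw(4)] aw(3) mvec_add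
      by (intro twistedI[OF exp_lattice_mvec[OF Lambda_stable_col_exp[OF n_ge_2 s_in] B aw(1)]
            exp_lattice_mvec[OF Lambda_stable_col_exp[OF n_ge_2 t_in] B aw(2)]]) auto
  qed
  have inverse: "\<exists>e'\<in>C. (\<lambda>j. fst e j + fst e' j, \<lambda>j. snd e j + snd e' j) = (\<lambda>j. 0, \<lambda>j. 0)"
    if "e \<in> C" for e
    using neg[OF that] by force
  show ?thesis
    unfolding is_lmod_def Let_def twisted_ext_def
    using add zero inverse act twisted_supported
    by (auto simp: add.assoc add.commute mvec_add mvec_madd mvec_mmul mvec_mone)
qed

lemma twisted_incl_closed: "y \<in> N \<Longrightarrow> (y, \<lambda>j. 0) \<in> C"
  by (rule twistedI[OF exp_lattice_zero exp_lattice_zero]) auto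

lemma twisted_incl_hom: "lhom n (lat_mod n s' t') E (\<lambda>y. (y, \<lambda>j. 0))"
  unfolding lhom_def lat_mod_def twisted_ext_def lattice_st_eq_exp_lattice
  using twisted_incl_closed by (auto simp: mvec_zero)

lemma twisted_snd_closed: "e \<in> C \<Longrightarrow> snd e \<in> M"
  by (elim twistedE) (use col_lattices_subset[OF st(1-3)] exp_lattice_add in fastforce)

lemma twisted_snd_hom: "lhom n E (lat_mod n s t) snd"
  unfolding lhom_def lat_mod_def twisted_ext_def lattice_st_eq_exp_lattice
  using twisted_snd_closed by auto

lemma twisted_snd_surj: "snd ` C = M"
proof
  show "M \<subseteq> snd ` C"
  proof
    fix m assume m: "m \<in> M"
    have "(vscale h (vrestrict (- {s<..t}) m), m) \<in> C"
      by (rule twistedI[OF vrestrict_col_lattices[OF st(1-3) m]])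
        (auto simp: vscale_def vrestrict_add_compl intro: exp_lattice_zero)
    then show "m \<in> snd ` C"
      by force
  qed
qed (use twisted_snd_closed in blast)

lemma twisted_kernel: "(\<lambda>y. (y, \<lambda>j. 0)) ` N = {e \<in> C. snd e = (\<lambda>j. 0)}"
proof
  show "{e \<in> C. snd e = (\<lambda>j. 0)} \<subseteq> (\<lambda>y. (y, \<lambda>j. 0)) ` N"
  proof
    fix e assume e: "e \<in> {e \<in> C. snd e = (\<lambda>j. 0)}"
    then have "fst e \<in> N"
      using twisted_fst_if_snd_in_P\<^sub>t exp_lattice_zero by fastforce
    moreover have "e = (fst e, \<lambda>j. 0)"
      using e by (simp add: prod_eq_iff)
    ultimately show "e \<in> (\<lambda>y. (y, \<lambda>j. 0)) ` N"
      by blast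
  qed
qed (use twisted_incl_closed in auto)

text \<open>A section makes the first component a scalar \<open>g\<close> on \<open>(s,t)\<close>; then evaluate at the two
  generators.\<close>

lemma twisted_section_decomposes:
  assumes "has_section n E (lat_mod n s t) snd"
  shows "\<exists>g. inxR (dexp s' t' s) (g - h) \<and> inxR (dexp s' t' t - 1) g"
proof -
  obtain \<sigma> where \<sigma>: "lhom n (lat_mod n s t) E \<sigma>" and snd_\<sigma>: "\<And>m. m \<in> M \<Longrightarrow> snd (\<sigma> m) = m"
    using assms unfolding has_section_def lat_mod_def lattice_st_eq_exp_lattice by auto
  have \<sigma>_closed: "\<And>m. m \<in> M \<Longrightarrow> \<sigma> m \<in> C"
    and \<sigma>_act: "\<And>B m. B \<in> Lambda n \<Longrightarrow> m \<in> M \<Longrightarrow> fst (\<sigma> (mvec n B m)) = mvec n B (fst (\<sigma> m))"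
    using \<sigma> unfolding lhom_def lat_mod_def twisted_ext_def lattice_st_eq_exp_lattice by auto
  obtain g where g: "\<And>m. m \<in> M \<Longrightarrow> fst (\<sigma> m) = vscale g m"
    using Lambda_equivariant_is_scalar[OF _ Lambda_stable_dexp[OF st(1-3)] \<sigma>_act]
      twisted_supported \<sigma>_closed st by fastforce
  have \<sigma>_eq: "\<sigma> m = (vscale g m, m)" if "m \<in> M" for m
    using g[OF that] snd_\<sigma>[OF that] by (simp add: prod_eq_iff)
  have gen: "unit_vec s (xpow 0) \<in> P\<^sub>s" "unit_vec t (xpow 1) \<in> P\<^sub>t"
    using unit_vec_col_lattice s_in t_in by blast+
  then have "unit_vec s (xpow 0) \<in> M" "unit_vec t (xpow 1) \<in> M"
    using col_lattices_subset[OF st(1-3)] by blast+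
  then have "(vscale g (unit_vec s (xpow 0)), unit_vec s (xpow 0)) \<in> C"
    "(vscale g (unit_vec t (xpow 1)), unit_vec t (xpow 1)) \<in> C"
    using \<sigma>_closed \<sigma>_eq by metis+
  then have "(\<lambda>j. vscale g (unit_vec s (xpow 0)) j - h * unit_vec s (xpow 0) j) \<in> N"
    "vscale g (unit_vec t (xpow 1)) \<in> N"
    using twisted_fst_if_snd_in_P\<^sub>s twisted_fst_if_snd_in_P\<^sub>t gen by fastforce+
  then have "inxR (dexp s' t' s) (g - h)" "inxR (dexp s' t' t - 1 + 1) (g * xpow 1)"
    using exp_latticeD(2) s_in t_in by (fastforce simp: vscale_def)+
  then show ?thesis
    using inxR_mult_xpow_iff by blast
qed

end

lemma ext1_nonzero_if_interleaved:
  assumes st: "1 \<le> s" "s < t" "t \<le> n" "1 \<le> s'" "s' < t'" "t' \<le> n"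
    and "interleaved s t s' t'"
  shows "ext1_nonzero n (lat_mod n s t :: ('k::field vec, 'k mat) lmod) (lat_mod n s' t')"
proof -
  define k where "k = twist_exp s t s' t'"
  interpret twisted_extension n s t s' t' "xpow k :: 'k poly fract"
  proof
    fix u :: "'k vec" assume "u \<in> exp_lattice n (meet_exp n s t)"
    then have "vscale (xpow k) u \<in> exp_lattice n (\<lambda>i. k + meet_exp n s t i)"
      using exp_lattice_vscale inxR_xpow by blast
    moreover have "exp_lattice n (\<lambda>i. k + meet_exp n s t i) \<subseteq> exp_lattice n (dexp s' t')"
      by (rule exp_lattice_antimono) (use dexp_le_twist_exp_meet_exp[OF assms] in \<open>simp add: k_def\<close>)
    ultimately show "vscale (xpow k) u \<in> exp_lattice n (dexp s' t')"
      by blast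
  qed (use st in auto)
  have "\<not> has_section n E (lat_mod n s t) snd"
  proof
    assume "has_section n E (lat_mod n s t) snd"
    then obtain g :: "'k poly fract"
      where "inxR (dexp s' t' s) (g - xpow k)" "inxR (dexp s' t' t - 1) g"
      using twisted_section_decomposes by blast
    then have "inxR (k + 1) (g - xpow k)" "inxR (k + 1) g"
      unfolding k_def twist_exp_def by (auto elim!: inxR_mono)
    then have "inxR (k + 1) (g - (g - xpow k))"
      by (rule inxR_diff[rotated])
    then show False
      by (simp add: xpow_not_inxR_succ)
  qed
  then show ?thesis
    unfolding ext1_nonzero_def has_section_def
    using twisted_is_lmod twisted_incl_hom twisted_snd_hom twisted_snd_surj twisted_kernel
    by (intro exI[of _ E] exI[of _ "\<lambda>y. (y, \<lambda>j. 0)"] exI[of _ snd])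
      (auto simp: inj_on_def twisted_ext_def lat_mod_def lattice_st_eq_exp_lattice)
qed

theorem proposition3p11:
  fixes n s t s' t' :: nat
  assumes "1 \<le> s" "s < t" "t \<le> n" "1 \<le> s'" "s' < t'" "t' \<le> n"
  shows "(ext1_nonzero n (lat_mod n s t :: ('k::field vec, 'k mat) lmod) (lat_mod n s' t')
            \<longleftrightarrow> ext1_nonzero n (lat_mod n s' t' :: ('k vec, 'k mat) lmod) (lat_mod n s t)) \<and>
         (ext1_nonzero n (lat_mod n s' t' :: ('k vec, 'k mat) lmod) (lat_mod n s t)
            \<longleftrightarrow> crossing_diagonals n s t s' t')"
proof -
  have "ext1_nonzero n (lat_mod n s t :: ('k vec, 'k mat) lmod) (lat_mod n s' t') \<longleftrightarrow> interleaved s t s' t'"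
    using ext1_nonzero_if_interleaved ext1_zero_if_not_interleaved assms by blast
  moreover have "ext1_nonzero n (lat_mod n s' t' :: ('k vec, 'k mat) lmod) (lat_mod n s t) \<longleftrightarrow> interleaved s' t' s t"
    using ext1_nonzero_if_interleaved ext1_zero_if_not_interleaved assms by blast
  ultimately show ?thesis
    using interleaved_sym crossing_diagonals_iff_interleaved[OF assms] by blast
qed

end
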